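(* Let $\mathcal{L}$ be a $d$-colex, $1\le k<d$, $C\subset\mathbb{Z}_{d+1}$ a set of $k$ colors and $c^*\in\mathbb{Z}_{d+1}\setminus C$. Let $\widetilde\gamma$ be a $k$-cycle for $\mathcal{L}$ with $\mathrm{col}(\widetilde\gamma)\subseteq C\sqcup\{c^*\}$, and for every vertex $v\in\Delta_0^{c^*}(\widetilde\gamma)$ let $\widetilde\Omega(v)\subseteq\mathrm{Star}_{d-k}(v)$ be a set of $(d-k)$-simplices, each of color set $\mathbb{Z}_{d+1}\setminus C$, with $\sum_{\mu\in\widetilde\Omega(v)}\mathrm{Link}_{k-1}(\mu)=\partial_k(\widetilde\gamma|_v)$. Define the $d$-chain $\lambda=\sum_{v\in\Delta_0^{c^*}(\widetilde\gamma)}\sum_{\mu\in\widetilde\Omega(v)}\mathrm{Star}_d(\mu)$. Then $\lambda\in\ker\partial_{d,k-1}$. Moreover, if $\widetilde\gamma\notin\mathrm{im}\,\partial_{k+1}$, then $\lambda\notin\mathrm{im}\,\partial_{d-k-1,d}$.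
   Context: Conventions: all complexes are finite. For a simplicial complex $\mathcal{L}$, $\Delta_k(\mathcal{L})$ is its set of $k$-simplices, and for a simplex $\kappa$, $\Delta_l(\kappa)$ is the set of its $l$-dimensional faces. $C_k(\mathcal{L})$ is the $\mathbb{F}_2$-vector space with basis $\Delta_k(\mathcal{L})$; chains are identified with subsets, addition being symmetric difference. $\partial_k\kappa=\sum_{\nu\in\Delta_{k-1}(\kappa)}\nu$; $k$-cycles are elements of $\ker\partial_k$, $k$-boundaries of $\mathrm{im}\,\partial_{k+1}$. For a $j$-simplex $\kappa$ and $n\ge j$, $\mathrm{Star}_n(\kappa)=\{\nu\in\Delta_n(\mathcal{L}):\kappa\in\Delta_j(\nu)\}$ (regarded as a chain); for $n\le d-j-1$, $\mathrm{Link}_n(\kappa)=\{\nu\in\Delta_n(\mathcal{L}):\nu\cap\kappa=\emptyset\text{ and some }d\text{-simplex contains both}\}$, regarded as an $n$-chain. Generalized boundary maps: for $j\ne n$, $\partial_{j,n}:C_j(\mathcal{L})\to C_n(\mathcal{L})$ is linear with $\partial_{j,n}\kappa=\sum_{\nu\in\Delta_n(\kappa)}\nu$ if $j>n$ and $=\sum_{\nu\in\mathrm{Star}_n(\kappa)}\nu$ if $j<n$. (The color code of type $k$ on $\mathcal{L}$ has qubits on $d$-simplices; $Z$-type logical operators are elements of $\ker\partial_{d,k-1}$, and trivial ones are elements of $\mathrm{im}\,\partial_{d-k-1,d}$.) Colexes: a colorable $0$-ball is a point and a $0$-colex is a finite set of points. For $d\ge1$, a colorable $d$-ball $\mathcal{B}_v$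 is the set of $d$-simplices $\{v*\delta:\delta\in\Delta_{d-1}(K)\}$ (where $v*\delta$ is the simplex spanned by $v$ and the vertices of $\delta$) for a $(d-1)$-colex $K$ homeomorphic to the $(d-1)$-sphere and a vertex $v\notin K$; its boundary is $\partial\mathcal{B}_v=K$. For $d\ge1$, a $d$-colex (without boundary) $\mathcal{L}$ is a homogeneous simplicial $d$-complex which is a finite union of colorable $d$-balls (sharing no $d$-simplex) glued along their boundaries so that every $(d-1)$-simplex lies in the boundary of exactly two distinct balls, and whose vertices are $(d+1)$-colorable: there is $\mathrm{col}:\Delta_0(\mathcal{L})\to\mathbb{Z}_{d+1}=\{0,\dots,d\}$ assigning distinct colors to the endpoints of every edge. Standing structure: for every vertex $v$, the set of $d$-simplices containing $v$ is the colorable $d$-ball centered at $v$, whose boundary is a $(d-1)$-colex homeomorphic to a $(d-1)$-sphere. For a simplex or chain $\alpha$, $\mathrm{col}(\alpha)$ is the set of colors of its vertices, and $\Delta_0^{c}(\alpha)$ is the set of vertices of color $c$ of simplices of $\alpha$. For an $n$-chain $\alpha$ and vertex $v$, $\alpha|_v=\alpha\cap\mathrm{Star}_n(v)$. *)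

theory Defs
  imports "HOL-Analysis.Analysis"
begin

(* A finite simplicial complex over vertex type 'v is represented by the set of all its
   simplices; a simplex is a nonempty finite set of vertices, a k-simplex has k+1 vertices. *)

definition simplicial_complex :: "'v set set \<Rightarrow> bool" where
  "simplicial_complex L \<longleftrightarrow> finite L \<and>
     (\<forall>s\<in>L. s \<noteq> {} \<and> finite s \<and> (\<forall>t. t \<subseteq> s \<and> t \<noteq> {} \<longrightarrow> t \<in> L))"

definition simplices :: "'v set set \<Rightarrow> nat \<Rightarrow> 'v set set" where
  "simplices L k = {s\<in>L. card s = Suc k}"

definition faces :: "'v set \<Rightarrow> nat \<Rightarrow> 'v set set" where
  "faces \<kappa> l = {s. s \<subseteq> \<kappa> \<and> card s = Suc l}"

definition vertices :: "'v set set \<Rightarrow> 'v set" where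
  "vertices L = \<Union>L"

(* F_2-sum of a finite family of chains (chains = sets of simplices, addition = symmetric
   difference): an element belongs to the sum iff it lies in an odd number of summands *)
definition csum :: "'i set \<Rightarrow> ('i \<Rightarrow> 'a set) \<Rightarrow> 'a set" where
  "csum I f = {x. odd (card {i\<in>I. x \<in> f i})}"

definition Star :: "'v set set \<Rightarrow> nat \<Rightarrow> 'v set \<Rightarrow> 'v set set" where
  "Star L n \<kappa> = {\<nu>\<in>simplices L n. \<kappa> \<subseteq> \<nu>}"

definition Link :: "'v set set \<Rightarrow> nat \<Rightarrow> nat \<Rightarrow> 'v set \<Rightarrow> 'v set set" where
  "Link L d n \<kappa> = {\<nu>\<in>simplices L n. \<nu> \<inter> \<kappa> = {} \<and> (\<exists>\<sigma>\<in>simplices L d. \<kappa> \<union> \<nu> \<subseteq> \<sigma>)}"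

definition gbd :: "'v set set \<Rightarrow> nat \<Rightarrow> nat \<Rightarrow> 'v set set \<Rightarrow> 'v set set" where
  "gbd L j n \<alpha> = csum \<alpha> (\<lambda>\<kappa>. if n < j then faces \<kappa> n else Star L n \<kappa>)"

(* the usual boundary partial_k = partial_{k,k-1} (k \<ge> 1) *)
definition bd :: "'v set set \<Rightarrow> nat \<Rightarrow> 'v set set \<Rightarrow> 'v set set" where
  "bd L k \<alpha> = gbd L k (k - 1) \<alpha>"

(* proper vertex colouring with colours {0..<m} = Z_m *)
definition proper_coloring :: "'v set set \<Rightarrow> nat \<Rightarrow> ('v \<Rightarrow> nat) \<Rightarrow> bool" where
  "proper_coloring L m col \<longleftrightarrow> (\<forall>v\<in>vertices L. col v < m) \<and>
     (\<forall>e\<in>simplices L 1. \<forall>x\<in>e. \<forall>y\<in>e. x \<noteq> y \<longrightarrow> col x \<noteq> col y)"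

definition realization :: "'v set set \<Rightarrow> ('v \<Rightarrow> real) set" where
  "realization K = {f. (\<forall>x. 0 \<le> f x) \<and> {x. f x \<noteq> 0} \<in> K \<and> sum f {x. f x \<noteq> 0} = 1}"

definition realtop :: "'v set set \<Rightarrow> ('v \<Rightarrow> real) topology" where
  "realtop K = subtopology (product_topology (\<lambda>_. euclideanreal) UNIV) (realization K)"

(* the colorable ball v * K as set of top simplices *)
definition cone :: "'v \<Rightarrow> 'v set set \<Rightarrow> nat \<Rightarrow> 'v set set" where
  "cone v K n = {insert v \<delta> | \<delta>. \<delta> \<in> simplices K n}"

primrec colex :: "nat \<Rightarrow> 'v set set \<Rightarrow> bool" where
  "colex 0 L \<longleftrightarrow> finite L \<and> (\<forall>s\<in>L. \<exists>x. s = {x})"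
| "colex (Suc n) L \<longleftrightarrow>
     simplicial_complex L \<and>
     (\<forall>s\<in>L. card s \<le> Suc (Suc n)) \<and>
     (\<forall>s\<in>L. \<exists>t\<in>simplices L (Suc n). s \<subseteq> t) \<and>
     (\<exists>col. proper_coloring L (Suc (Suc n)) col) \<and>
     (\<exists>Bs :: ('v \<times> 'v set set) set. finite Bs \<and>
        (\<forall>(v,K)\<in>Bs. colex n K \<and> (realtop K homeomorphic_space nsphere n) \<and>
                    v \<notin> vertices K \<and> cone v K n \<subseteq> simplices L (Suc n)) \<and>
        (\<forall>b1\<in>Bs. \<forall>b2\<in>Bs. b1 \<noteq> b2 \<longrightarrow>
             cone (fst b1) (snd b1) n \<inter> cone (fst b2) (snd b2) n = {}) \<and>
        (\<Union>(v,K)\<in>Bs. cone v K n) = simplices L (Suc n) \<and>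
        (\<forall>(v,K)\<in>Bs. \<forall>\<sigma>\<in>simplices K n.
             card {b\<in>Bs. \<sigma> \<in> simplices (snd b) n} = 2))"

definition vertex_balls :: "'v set set \<Rightarrow> nat \<Rightarrow> bool" where
  "vertex_balls L d \<longleftrightarrow> (\<forall>v\<in>vertices L. \<exists>K. colex (d - 1) K \<and>
      (realtop K homeomorphic_space nsphere (d - 1)) \<and> v \<notin> vertices K \<and>
      Star L d {v} = cone v K (d - 1))"

definition colored_vertices :: "('v \<Rightarrow> nat) \<Rightarrow> nat \<Rightarrow> 'v set set \<Rightarrow> 'v set" where
  "colored_vertices col c \<alpha> = {v\<in>\<Union>\<alpha>. col v = c}"

definition colset :: "('v \<Rightarrow> nat) \<Rightarrow> 'v set set \<Rightarrow> nat set" where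
  "colset col \<alpha> = col ` (\<Union>\<alpha>)"

end

theory Submission
  imports Defs
begin

text \<open>Everything is an incidence count modulo 2. In a \<open>d\<close>-colex every set of at most \<open>d\<close>
  vertices lies in an even number of \<open>d\<close>-simplices: for \<open>(d-1)\<close>-simplices this follows by
  induction on the dimension from the decomposition into balls, whose boundaries are spheres
  and in which every \<open>(d-1)\<close>-simplex lies on the boundary of exactly two balls; smaller sets
  reduce to this case by deleting a vertex of a colour they miss. Hence, for a simplex \<open>\<mu>\<close>
  and a set \<open>\<nu>\<close> with \<open>|\<mu>| + |\<nu>| \<le> d + 1\<close>, the number of \<open>d\<close>-simplices through \<open>\<mu> \<union> \<nu>\<close> is
  odd exactly when \<open>\<nu>\<close> lies in the link of \<open>\<mu>\<close>.

  For \<open>\<lambda>\<close> this turns the parity of the \<open>d\<close>-simplices of \<open>\<lambda>\<close> through a set into a count of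
  links of the simplices in \<open>\<Omega>(v)\<close>, which the hypothesis on \<open>\<Omega>\<close> converts into a count of
  simplices of \<open>\<gamma>\<close>: on \<open>(k-1)\<close>-sets this gives \<open>\<partial>\<^sub>d\<^sub>,\<^sub>k\<^sub>-\<^sub>1 \<lambda> = \<partial>\<^sub>k \<gamma>\<close>, and on \<open>k\<close>-sets
  with the colours \<open>C \<union> {c*}\<close> it recovers \<open>\<gamma>\<close> itself. If \<open>\<lambda> = \<Sum>\<^sub>b\<^sub>\<in>\<^sub>\<beta> Star\<^sub>d(b)\<close>, the same link
  computation identifies \<open>\<gamma>\<close> with the sum of the \<open>(C \<union> {c*})\<close>-coloured parts of the links of
  the \<open>b \<in> \<beta>\<close>; these are cycles, and coning each from a vertex of \<open>b\<close> exhibits \<open>\<gamma>\<close> as a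
  boundary.\<close>

section \<open>Chains over \<open>\<bbbF>\<^sub>2\<close>\<close>

lemma csum_subset_Union: "csum I F \<subseteq> \<Union>(F ` I)"
proof
  fix x assume "x \<in> csum I F"
  then have "{i\<in>I. x \<in> F i} \<noteq> {}"
    unfolding csum_def by (metis (mono_tags, lifting) card.empty even_zero mem_Collect_eq)
  then show "x \<in> \<Union>(F ` I)"
    by blast
qed

lemma odd_card_csum_filter:
  assumes "finite I" "\<And>i. i \<in> I \<Longrightarrow> finite (F i)"
  shows "odd (card {x\<in>csum I F. Q x}) \<longleftrightarrow> odd (\<Sum>i\<in>I. card {x\<in>F i. Q x})"
proof -
  define U where "U = {x\<in>\<Union>(F ` I). Q x}"
  have U: "finite U"
    using assms by (simp add: U_def)
  have "x \<in> \<Union>(F ` I)" if "odd (card {i\<in>I. x \<in> F i})" for x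
    using that by (metis (mono_tags, lifting) UN_I card.empty empty_Collect_eq even_zero)
  then have "{x\<in>csum I F. Q x} = {x\<in>U. odd (card {i\<in>I. x \<in> F i})}"
    by (auto simp: csum_def U_def)
  then have "odd (card {x\<in>csum I F. Q x}) \<longleftrightarrow> odd (\<Sum>x\<in>U. card {i\<in>I. x \<in> F i})"
    using U by (simp add: even_sum_iff)
  also have "(\<Sum>x\<in>U. card {i\<in>I. x \<in> F i}) = (\<Sum>x\<in>U. \<Sum>i\<in>I. if x \<in> F i then 1 else 0)"
    using assms(1) by (simp add: sum.If_cases Int_def)
  also have "\<dots> = (\<Sum>i\<in>I. \<Sum>x\<in>U. if x \<in> F i then 1 else 0)"
    by (rule sum.swap)
  also have "\<dots> = (\<Sum>i\<in>I. card {x\<in>F i. Q x})"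
  proof (rule sum.cong[OF refl])
    fix i assume "i \<in> I"
    then have "{x\<in>F i. Q x} = U \<inter> F i"
      by (auto simp: U_def)
    then show "(\<Sum>x\<in>U. if x \<in> F i then 1 else 0) = card {x\<in>F i. Q x}"
      using U by (simp add: sum.If_cases)
  qed
  finally show ?thesis .
qed

lemma odd_sum_iff_odd_card:
  assumes "finite A" "\<And>a. a \<in> A \<Longrightarrow> odd (f a :: nat) \<longleftrightarrow> P a"
  shows "odd (sum f A) \<longleftrightarrow> odd (card {a\<in>A. P a})"
proof -
  have "{a\<in>A. odd (f a)} = {a\<in>A. P a}"
    using assms(2) by blast
  then show ?thesis
    using assms(1) by (simp add: even_sum_iff)
qed

lemma odd_sum_cong:
  assumes "finite A" "\<And>a. a \<in> A \<Longrightarrow> odd (f a) \<longleftrightarrow> odd (g a)"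
  shows "odd (sum f A) \<longleftrightarrow> odd (sum g A :: nat)"
proof -
  have "{a\<in>A. odd (f a)} = {a\<in>A. odd (g a)}"
    using assms(2) by blast
  then show ?thesis
    using assms(1) by (simp add: even_sum_iff)
qed

lemma sum_card_filter_mem_eq_card:
  assumes "finite V" "finite G" "\<And>\<kappa>. \<kappa> \<in> G \<Longrightarrow> card (V \<inter> \<kappa>) = 1"
  shows "(\<Sum>v\<in>V. card {\<kappa>\<in>G. v \<in> \<kappa>}) = card G"
proof -
  have "(\<Sum>v\<in>V. card {\<kappa>\<in>G. v \<in> \<kappa>}) = (\<Sum>v\<in>V. \<Sum>\<kappa>\<in>G. if v \<in> \<kappa> then 1 else 0)"
    using assms(2) by (simp add: sum.If_cases Int_def conj_commute)
  also have "\<dots> = (\<Sum>\<kappa>\<in>G. \<Sum>v\<in>V. if v \<in> \<kappa> then 1 else 0)"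
    by (rule sum.swap)
  also have "\<dots> = (\<Sum>\<kappa>\<in>G. card (V \<inter> \<kappa>))"
    using assms(1) by (simp add: sum.If_cases)
  finally show ?thesis
    using assms(3) by simp
qed

lemma mem_bd_iff:
  "0 < k \<Longrightarrow> x \<in> bd L k \<alpha> \<longleftrightarrow> card x = k \<and> odd (card {\<sigma>\<in>\<alpha>. x \<subseteq> \<sigma>})"
  by (cases "card x = k") (auto simp: bd_def gbd_def csum_def faces_def)

lemma mem_gbd_down_iff:
  "j < n \<Longrightarrow> x \<in> gbd L n j \<alpha> \<longleftrightarrow> card x = Suc j \<and> odd (card {\<sigma>\<in>\<alpha>. x \<subseteq> \<sigma>})"
  by (cases "card x = Suc j") (auto simp: gbd_def csum_def faces_def)

lemma gbd_up_eq: "j \<le> n \<Longrightarrow> gbd L j n \<beta> = csum \<beta> (Star L n)"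
  by (simp add: gbd_def)

lemma Star_Un: "{\<sigma>\<in>Star L d \<mu>. X \<subseteq> \<sigma>} = Star L d (\<mu> \<union> X)"
  by (auto simp: Star_def)

lemma finite_Star: "finite L \<Longrightarrow> finite (Star L d \<mu>)"
  by (simp add: Star_def simplices_def)

lemma odd_card_csum_Star_supsets:
  assumes "finite L" "finite I"
  shows "odd (card {\<sigma>\<in>csum I (\<lambda>i. Star L d (f i)). X \<subseteq> \<sigma>}) \<longleftrightarrow>
           odd (\<Sum>i\<in>I. card (Star L d (f i \<union> X)))"
  using odd_card_csum_filter[OF assms(2) finite_Star[OF assms(1)]] by (simp add: Star_Un)

lemma Star_eq_empty_if_card_gt:
  assumes "Suc d < card X"
  shows "Star L d X = {}"
proof -
  have "\<not> X \<subseteq> \<sigma>" if "card \<sigma> = Suc d" for \<sigma>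
    using that assms card_mono[of \<sigma> X] card.infinite[of \<sigma>] by fastforce
  then show ?thesis
    by (auto simp: Star_def simplices_def)
qed

lemma Star_top:
  assumes "card X = Suc d"
  shows "Star L d X = (if X \<in> simplices L d then {X} else {})"
proof -
  have "X = \<sigma>" if "card \<sigma> = Suc d" "X \<subseteq> \<sigma>" for \<sigma>
    using that assms card_subset_eq[of \<sigma> X] card.infinite[of \<sigma>] by fastforce
  then show ?thesis
    by (auto simp: Star_def simplices_def)
qed

section \<open>Simplices and colourings\<close>

lemma simplicesD:
  assumes "s \<in> simplices L n"
  shows "s \<in> L" "card s = Suc n" "finite s"
  using assms by (simp_all add: simplices_def card_ge_0_finite)

lemma simplicial_complex_face:
  "simplicial_complex L \<Longrightarrow> s \<in> L \<Longrightarrow> t \<subseteq> s \<Longrightarrow> t \<noteq> {} \<Longrightarrow> t \<in> L"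
  unfolding simplicial_complex_def by blast

lemma finite_simplices: "finite L \<Longrightarrow> finite (simplices L n)"
  by (simp add: simplices_def)

lemma colex_finite: "colex n K \<Longrightarrow> finite K"
  by (cases n) (auto simp: simplicial_complex_def)

lemma colex_simplicial_complex: "colex d L \<Longrightarrow> 0 < d \<Longrightarrow> simplicial_complex L"
  by (cases d) simp_all

lemma proper_coloring_inj_on:
  assumes L: "simplicial_complex L" and col: "proper_coloring L m col" and s: "s \<in> L"
  shows "inj_on col s"
proof
  fix x y assume xy: "x \<in> s" "y \<in> s" "col x = col y"
  show "x = y"
  proof (rule ccontr)
    assume "x \<noteq> y"
    then have "{x, y} \<in> simplices L 1"
      using simplicial_complex_face[OF L s, of "{x, y}"] xy by (simp add: simplices_def)
    then show False
      using col \<open>x \<noteq> y\<close> xy(3) by (auto simp: proper_coloring_def)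
  qed
qed

lemma proper_coloring_top_simplex:
  assumes L: "simplicial_complex L" and col: "proper_coloring L (Suc d) col"
    and \<sigma>: "\<sigma> \<in> simplices L d"
  shows "col ` \<sigma> = {..<Suc d}"
proof -
  have "\<sigma> \<in> L" "card \<sigma> = Suc d"
    using \<sigma> by (auto simp: simplices_def)
  moreover have "col ` \<sigma> \<subseteq> {..<Suc d}"
    using col \<open>\<sigma> \<in> L\<close> by (auto simp: proper_coloring_def vertices_def)
  ultimately show ?thesis
    using proper_coloring_inj_on[OF L col] by (simp add: card_image card_subset_eq)
qed

section \<open>Parity of stars in a colex\<close>

lemma card_topspace_nsphere_0: "card (topspace (nsphere 0)) = 2"
proof -
  define e :: "real \<Rightarrow> nat \<Rightarrow> real" where "e t = (\<lambda>i. if i = 0 then t else 0)" for t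
  have "topspace (nsphere 0) = {x. (x 0)\<^sup>2 = 1 \<and> (\<forall>i>0. x i = 0)}"
    by (simp add: nsphere)
  also have "\<dots> = {e 1, e (-1)}"
  proof (intro equalityI subsetI)
    fix x :: "nat \<Rightarrow> real" assume x: "x \<in> {x. (x 0)\<^sup>2 = 1 \<and> (\<forall>i>0. x i = 0)}"
    then have "x 0 = 1 \<or> x 0 = -1"
      by (simp add: power2_eq_1_iff)
    moreover have "x = e (x 0)"
      using x by (intro ext) (simp add: e_def)
    ultimately show "x \<in> {e 1, e (-1)}"
      by force
  qed (auto simp: e_def)
  also have "card {e 1, e (-1)} = 2"
  proof -
    have "e 1 0 \<noteq> e (-1) 0"
      by (simp add: e_def)
    then show ?thesis
      by (metis card_2_iff)
  qed
  finally show ?thesis .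
qed

lemma realization_of_points:
  assumes singletons: "\<forall>s\<in>K. \<exists>x. s = {x}"
  shows "realization K = (\<lambda>s x. if x \<in> s then 1 else 0) ` K"
    (is "_ = ?h ` K")
proof
  show "realization K \<subseteq> ?h ` K"
  proof
    fix f assume "f \<in> realization K"
    then have s: "{x. f x \<noteq> 0} \<in> K" and sum: "sum f {x. f x \<noteq> 0} = 1"
      unfolding realization_def by blast+
    then obtain a where a: "{x. f x \<noteq> 0} = {a}"
      using singletons by blast
    have "f a = 1"
      using sum unfolding a by simp
    moreover have "f x = 0" if "x \<noteq> a" for x
      using a that by blast
    ultimately have "f = ?h {a}"
      by (intro ext) simp
    then show "f \<in> ?h ` K"
      using s unfolding a by (rule image_eqI)
  qed
next
  show "?h ` K \<subseteq> realization K"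
  proof
    fix f assume "f \<in> ?h ` K"
    then obtain t where t: "t \<in> K" "f = ?h t"
      by blast
    then obtain a where "t = {a}"
      using singletons by blast
    with t have a: "{a} \<in> K" "f = ?h {a}"
      by simp_all
    have "{x. f x \<noteq> 0} = {a}"
      unfolding a(2) by auto
    moreover have "\<forall>x. 0 \<le> f x"
      unfolding a(2) by simp
    moreover have "sum f {a} = 1"
      unfolding a(2) by simp
    ultimately show "f \<in> realization K"
      using a(1) unfolding realization_def by simp
  qed
qed

lemma card_colex_0_sphere:
  assumes "colex 0 K" "realtop K homeomorphic_space nsphere 0"
  shows "card K = 2"
proof -
  define h :: "'a set \<Rightarrow> 'a \<Rightarrow> real" where "h s = (\<lambda>x. if x \<in> s then 1 else 0)" for s
  have "\<forall>s\<in>K. \<exists>x. s = {x}"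
    using assms(1) by simp
  then have realization: "realization K = h ` K"
    unfolding h_def by (rule realization_of_points)
  have "{x. h s x \<noteq> 0} = s" for s
    by (auto simp: h_def)
  then have "inj_on h K"
    by (metis inj_onI)
  then have "card (realization K) = card K"
    using realization by (simp add: card_image)
  moreover obtain f where "homeomorphic_map (realtop K) (nsphere 0) f"
    using assms(2) homeomorphic_space by blast
  then have "card (topspace (realtop K)) = card (topspace (nsphere 0))"
    by (metis card_image homeomorphic_imp_injective_map homeomorphic_imp_surjective_map)
  moreover have "topspace (realtop K) = realization K"
    by (simp add: realtop_def)
  ultimately show ?thesis
    using card_topspace_nsphere_0 by simp
qed

lemma card_cone_supsets:
  assumes v: "v \<notin> vertices K" and \<tau>: "card \<tau> = Suc n"
  shows "card {\<sigma>\<in>cone v K n. \<tau> \<subseteq> \<sigma>} =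
           (if v \<in> \<tau> then card (Star K n (\<tau> - {v})) else 0) + (if \<tau> \<in> simplices K n then 1 else 0)"
proof -
  have v_notin: "v \<notin> \<delta>" if "\<delta> \<in> simplices K n" for \<delta>
    using v that by (auto simp: vertices_def simplices_def)
  have cone: "cone v K n = insert v ` simplices K n"
    by (auto simp: cone_def)
  show ?thesis
  proof (cases "v \<in> \<tau>")
    case True
    have "{\<sigma>\<in>cone v K n. \<tau> \<subseteq> \<sigma>} = insert v ` Star K n (\<tau> - {v})"
      using True by (auto simp: cone Star_def)
    moreover have "inj_on (insert v) (Star K n (\<tau> - {v}))"
      using v_notin unfolding Star_def
      by (intro inj_onI) (metis (no_types, lifting) insert_ident mem_Collect_eq)
    moreover have "\<tau> \<notin> simplices K n"
      using True v_notin by blast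
    ultimately show ?thesis
      using True by (simp add: card_image)
  next
    case False
    have "\<delta> = \<tau>" if "\<delta> \<in> simplices K n" "\<tau> \<subseteq> insert v \<delta>" for \<delta>
    proof -
      have "\<tau> \<subseteq> \<delta>" "card \<delta> = Suc n"
        using that False by (auto simp: simplices_def)
      then show ?thesis
        using \<tau> by (metis card_subset_eq card.infinite nat.distinct(1))
    qed
    then have "{\<sigma>\<in>cone v K n. \<tau> \<subseteq> \<sigma>} = (if \<tau> \<in> simplices K n then {insert v \<tau>} else {})"
      by (auto simp: cone)
    then show ?thesis
      using False by simp
  qed
qed

text \<open>Counting the \<open>(n+1)\<close>-simplices through an \<open>n\<close>-simplex \<open>\<tau>\<close> ball by ball: a ball \<open>v * K\<close>
  with \<open>v \<in> \<tau>\<close> contributes the star of \<open>\<tau> - {v}\<close> in the sphere \<open>K\<close>, even by induction, and the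
  balls with \<open>v \<notin> \<tau>\<close> contribute one simplex each whenever \<open>\<tau> \<in> K\<close>, which happens for
  exactly two balls.\<close>

lemma even_card_Star_facet_step:
  fixes L :: "'a set set"
  assumes L: "colex (Suc n) L" and \<tau>: "card \<tau> = Suc n"
    and IH: "\<And>(K :: 'a set set) \<rho>. colex n K \<Longrightarrow> realtop K homeomorphic_space nsphere n \<Longrightarrow>
               finite \<rho> \<Longrightarrow> card \<rho> = n \<Longrightarrow> even (card (Star K n \<rho>))"
  shows "even (card (Star L (Suc n) \<tau>))"
proof -
  from L obtain Bs where fin: "finite Bs"
    and B: "\<forall>(v,K)\<in>Bs. colex n K \<and> (realtop K homeomorphic_space nsphere n) \<and>
                    v \<notin> vertices K \<and> cone v K n \<subseteq> simplices L (Suc n)"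
    and disj: "\<forall>b1\<in>Bs. \<forall>b2\<in>Bs. b1 \<noteq> b2 \<longrightarrow>
             cone (fst b1) (snd b1) n \<inter> cone (fst b2) (snd b2) n = {}"
    and U: "(\<Union>(v,K)\<in>Bs. cone v K n) = simplices L (Suc n)"
    and two: "\<forall>(v,K)\<in>Bs. \<forall>\<sigma>\<in>simplices K n. card {b\<in>Bs. \<sigma> \<in> simplices (snd b) n} = 2"
    by (auto simp only: colex.simps)
  define X where "X b = {\<sigma>\<in>cone (fst b) (snd b) n. \<tau> \<subseteq> \<sigma>}" for b
  define e where "e b = (if fst b \<in> \<tau> then card (Star (snd b) n (\<tau> - {fst b})) else 0)" for b
  have "Star L (Suc n) \<tau> = (\<Union>b\<in>Bs. X b)"
    using U unfolding X_def Star_def by (auto simp: case_prod_beta)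
  moreover have "finite (X b)" if "b \<in> Bs" for b
    using B that colex_finite[of n "snd b"] by (auto simp: X_def cone_def simplices_def)
  moreover have "X b1 \<inter> X b2 = {}" if "b1 \<in> Bs" "b2 \<in> Bs" "b1 \<noteq> b2" for b1 b2
    using disj that unfolding X_def by blast
  ultimately have "card (Star L (Suc n) \<tau>) = (\<Sum>b\<in>Bs. card (X b))"
    using fin by (simp add: card_UN_disjoint)
  also have "\<dots> = (\<Sum>b\<in>Bs. e b) + card {b\<in>Bs. \<tau> \<in> simplices (snd b) n}"
  proof -
    have "card (X b) = e b + (if \<tau> \<in> simplices (snd b) n then 1 else 0)" if "b \<in> Bs" for b
      using B that card_cone_supsets[of "fst b" "snd b" \<tau> n] \<tau> by (auto simp: X_def e_def)
    then show ?thesis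
      using fin by (simp add: sum.distrib sum.If_cases Int_def)
  qed
  finally have card_Star: "card (Star L (Suc n) \<tau>) = (\<Sum>b\<in>Bs. e b) + card {b\<in>Bs. \<tau> \<in> simplices (snd b) n}" .
  have "even (e b)" if "b \<in> Bs" for b
    using B that IH[of "snd b" "\<tau> - {fst b}"] \<tau> by (auto simp: e_def card_ge_0_finite)
  moreover have "even (card {b\<in>Bs. \<tau> \<in> simplices (snd b) n})"
  proof (cases "{b\<in>Bs. \<tau> \<in> simplices (snd b) n} = {}")
    case False
    then obtain b where "b \<in> Bs" "\<tau> \<in> simplices (snd b) n"
      by blast
    then show ?thesis
      using two by (cases b) fastforce
  qed (simp only: card.empty even_zero)
  ultimately show ?thesis
    using card_Star by (simp add: dvd_sum)
qed

lemma even_card_Star_facet: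
  fixes L :: "'a set set"
  shows "colex (Suc m) L \<Longrightarrow> finite \<tau> \<Longrightarrow> card \<tau> = Suc m \<Longrightarrow> even (card (Star L (Suc m) \<tau>))"
proof (induction m arbitrary: L \<tau>)
  case 0
  show ?case
  proof (rule even_card_Star_facet_step[OF 0(1,3)])
    fix K :: "'a set set" and \<rho> :: "'a set"
    assume K: "colex 0 K" "realtop K homeomorphic_space nsphere 0" and "finite \<rho>" "card \<rho> = 0"
    then have "Star K 0 \<rho> = K"
      using K(1) by (auto simp: Star_def simplices_def)
    then show "even (card (Star K 0 \<rho>))"
      using card_colex_0_sphere[OF K] by simp
  qed
next
  case (Suc m)
  show ?case
    by (rule even_card_Star_facet_step[OF Suc.prems(1,3)]) (use Suc.IH in blast)
qed

lemma card_drop_colour: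
  assumes L: "simplicial_complex L" and col: "proper_coloring L (Suc d) col"
    and \<sigma>: "\<sigma> \<in> simplices L d" and "c < Suc d"
  shows "finite {x\<in>\<sigma>. col x \<noteq> c}" "card {x\<in>\<sigma>. col x \<noteq> c} = d"
proof -
  have "c \<in> col ` \<sigma>"
    using proper_coloring_top_simplex[OF L col \<sigma>] \<open>c < Suc d\<close> by simp
  then obtain x where x: "x \<in> \<sigma>" "col x = c"
    by blast
  have "col y \<noteq> c" if "y \<in> \<sigma>" "y \<noteq> x" for y
    using inj_onD[OF proper_coloring_inj_on[OF L col simplicesD(1)[OF \<sigma>]] _ that(1) x(1)] that(2) x(2)
    by metis
  then have "{x\<in>\<sigma>. col x \<noteq> c} = \<sigma> - {x}"
    using x by auto
  then show "finite {x\<in>\<sigma>. col x \<noteq> c}" "card {x\<in>\<sigma>. col x \<noteq> c} = d"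
    using x(1) simplicesD(2,3)[OF \<sigma>] by simp_all
qed

lemma card_Star_eq_sum_facets:
  assumes L: "simplicial_complex L" and col: "proper_coloring L (Suc d) col"
    and c: "c < Suc d" "c \<notin> col ` \<tau>"
  shows "card (Star L d \<tau>) = (\<Sum>\<rho>\<in>(\<lambda>\<sigma>. {x\<in>\<sigma>. col x \<noteq> c}) ` Star L d \<tau>. card (Star L d \<rho>))"
proof -
  define facet where "facet \<sigma> = {x\<in>\<sigma>. col x \<noteq> c}" for \<sigma>
  have facet: "finite (facet \<sigma>)" "card (facet \<sigma>) = d" if \<sigma>: "\<sigma> \<in> simplices L d" for \<sigma>
    unfolding facet_def using card_drop_colour[OF L col \<sigma> c(1)] by simp_all
  have fiber: "{\<sigma>\<in>Star L d \<tau>. facet \<sigma> = \<rho>} = Star L d \<rho>" if \<rho>: "\<rho> \<in> facet ` Star L d \<tau>" for \<rho>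
  proof -
    obtain \<sigma>\<^sub>0 where \<sigma>\<^sub>0: "\<sigma>\<^sub>0 \<in> simplices L d" "\<tau> \<subseteq> \<sigma>\<^sub>0" "\<rho> = facet \<sigma>\<^sub>0"
      using \<rho> unfolding Star_def by blast
    have "\<tau> \<subseteq> \<rho>"
      using \<sigma>\<^sub>0(2,3) c(2) unfolding facet_def by blast
    have "facet \<sigma> = \<rho>" if \<sigma>: "\<sigma> \<in> simplices L d" "\<rho> \<subseteq> \<sigma>" for \<sigma>
    proof -
      have "\<rho> \<subseteq> facet \<sigma>"
        using \<sigma>(2) \<sigma>\<^sub>0(3) unfolding facet_def by blast
      then show ?thesis
        using card_subset_eq[OF facet(1)[OF \<sigma>(1)]] facet(2)[OF \<sigma>(1)] facet(2)[OF \<sigma>\<^sub>0(1)] \<sigma>\<^sub>0(3)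
        by metis
    qed
    moreover have "facet \<sigma> \<subseteq> \<sigma>" for \<sigma>
      unfolding facet_def by blast
    ultimately show ?thesis
      using \<open>\<tau> \<subseteq> \<rho>\<close> unfolding Star_def by blast
  qed
  have "finite (Star L d \<tau>)"
    using L by (simp add: finite_Star simplicial_complex_def)
  then have "card (Star L d \<tau>) = (\<Sum>\<rho>\<in>facet ` Star L d \<tau>. card {\<sigma>\<in>Star L d \<tau>. facet \<sigma> = \<rho>})"
    using sum.group[of "Star L d \<tau>" "facet ` Star L d \<tau>" facet "\<lambda>_. 1 :: nat"] by simp
  also have "\<dots> = (\<Sum>\<rho>\<in>facet ` Star L d \<tau>. card (Star L d \<rho>))"
    using fiber by simp
  finally show ?thesis
    unfolding facet_def .
qed

lemma even_card_Star:
  assumes L: "colex d L" and "0 < d" and \<tau>: "finite \<tau>" "card \<tau> \<le> d"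
  shows "even (card (Star L d \<tau>))"
proof -
  obtain d' where d: "d = Suc d'"
    using \<open>0 < d\<close> gr0_implies_Suc by blast
  have sc: "simplicial_complex L"
    using L d by simp
  have "\<exists>col. proper_coloring L (Suc d) col"
    using L unfolding d colex.simps by (elim conjE) assumption
  then obtain col where col: "proper_coloring L (Suc d) col" ..
  have "card (col ` \<tau>) < card {..<Suc d}"
    using card_image_le[OF \<tau>(1), of col] \<tau>(2) by simp
  then have "\<not> {..<Suc d} \<subseteq> col ` \<tau>"
    using card_mono[OF finite_imageI[OF \<tau>(1)]] leD by blast
  then obtain c where c: "c < Suc d" "c \<notin> col ` \<tau>"
    by blast
  have "even (card (Star L d \<rho>))" if \<rho>: "\<rho> \<in> (\<lambda>\<sigma>. {x\<in>\<sigma>. col x \<noteq> c}) ` Star L d \<tau>" for \<rho>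
  proof -
    obtain \<sigma> where "\<sigma> \<in> simplices L d" "\<rho> = {x\<in>\<sigma>. col x \<noteq> c}"
      using \<rho> unfolding Star_def by blast
    then show ?thesis
      using card_drop_colour[OF sc col _ c(1)] even_card_Star_facet[of d' L \<rho>] L d by simp
  qed
  then show ?thesis
    using card_Star_eq_sum_facets[OF sc col c] by (simp add: dvd_sum)
qed

section \<open>Links and cones\<close>

lemma Link_top_eq:
  assumes L: "simplicial_complex L" and b: "b \<in> simplices L m" and d: "Suc (m + n) = d"
  shows "Link L d n b = (\<lambda>\<sigma>. \<sigma> - b) ` Star L d b"
proof (intro equalityI subsetI)
  fix \<tau> assume "\<tau> \<in> Link L d n b"
  then obtain \<sigma> where \<tau>: "\<tau> \<in> simplices L n" "\<tau> \<inter> b = {}"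
    and \<sigma>: "\<sigma> \<in> simplices L d" "b \<union> \<tau> \<subseteq> \<sigma>"
    unfolding Link_def by blast
  have "card (b \<union> \<tau>) = card \<sigma>"
    using card_Un_disjoint[OF simplicesD(3)[OF b] simplicesD(3)[OF \<tau>(1)]] \<tau>(2)
      simplicesD(2)[OF b] simplicesD(2)[OF \<tau>(1)] simplicesD(2)[OF \<sigma>(1)] d
    by (simp add: Int_commute)
  then have "\<sigma> = b \<union> \<tau>"
    using card_subset_eq[OF simplicesD(3)[OF \<sigma>(1)] \<sigma>(2)] by simp
  then show "\<tau> \<in> (\<lambda>\<sigma>. \<sigma> - b) ` Star L d b"
    using \<sigma>(1) \<tau>(2) by (auto simp: Star_def)
next
  fix \<tau> assume "\<tau> \<in> (\<lambda>\<sigma>. \<sigma> - b) ` Star L d b"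
  then obtain \<sigma> where \<sigma>: "\<sigma> \<in> simplices L d" "b \<subseteq> \<sigma>" and \<tau>: "\<tau> = \<sigma> - b"
    unfolding Star_def by blast
  have "card \<tau> = Suc n"
    using card_Diff_subset[OF simplicesD(3)[OF b] \<sigma>(2)] simplicesD(2)[OF b] simplicesD(2)[OF \<sigma>(1)] \<tau> d
    by simp
  moreover have "\<tau> \<in> L"
  proof -
    have "\<tau> \<noteq> {}"
      using \<open>card \<tau> = Suc n\<close> by auto
    then show ?thesis
      using simplicial_complex_face[OF L simplicesD(1)[OF \<sigma>(1)], of \<tau>] \<tau> by blast
  qed
  ultimately show "\<tau> \<in> Link L d n b"
    using \<sigma> \<tau> by (auto simp: Link_def simplices_def)
qed

lemma odd_card_Star_Un_iff_Link:
  assumes L: "colex d L" and \<mu>: "\<mu> \<in> simplices L m" and d: "Suc (m + n) = d"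
    and \<nu>: "finite \<nu>" "card \<nu> \<le> Suc n"
  shows "odd (card (Star L d (\<mu> \<union> \<nu>))) \<longleftrightarrow> \<nu> \<in> Link L d n \<mu>"
proof (cases "\<mu> \<inter> \<nu> = {} \<and> card \<nu> = Suc n")
  case True
  have sc: "simplicial_complex L"
    using colex_simplicial_complex[OF L] d[symmetric] by simp
  have "card (\<mu> \<union> \<nu>) = Suc d"
    using card_Un_disjoint[OF simplicesD(3)[OF \<mu>] \<nu>(1)] True simplicesD(2)[OF \<mu>] d by simp
  moreover have "\<nu> \<in> Link L d n \<mu> \<longleftrightarrow> \<mu> \<union> \<nu> \<in> simplices L d"
  proof
    assume "\<nu> \<in> Link L d n \<mu>"
    then obtain \<sigma> where "\<sigma> \<in> simplices L d" "\<mu> \<subseteq> \<sigma>" "\<nu> = \<sigma> - \<mu>"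
      unfolding Link_top_eq[OF sc \<mu> d] Star_def by blast
    then show "\<mu> \<union> \<nu> \<in> simplices L d"
      by (simp add: Un_absorb1)
  next
    assume "\<mu> \<union> \<nu> \<in> simplices L d"
    then have "\<mu> \<union> \<nu> \<in> Star L d \<mu>"
      by (simp add: Star_def)
    moreover have "\<nu> = (\<mu> \<union> \<nu>) - \<mu>"
      using True by blast
    ultimately show "\<nu> \<in> Link L d n \<mu>"
      unfolding Link_top_eq[OF sc \<mu> d] by blast
  qed
  ultimately show ?thesis
    by (simp add: Star_top)
next
  case False
  have "card (\<mu> \<union> \<nu>) + card (\<mu> \<inter> \<nu>) = Suc m + card \<nu>"
    using card_Un_Int[OF simplicesD(3)[OF \<mu>] \<nu>(1)] simplicesD(2)[OF \<mu>] by simp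
  moreover have "\<mu> \<inter> \<nu> \<noteq> {} \<Longrightarrow> 0 < card (\<mu> \<inter> \<nu>)"
    using \<nu>(1) by (simp add: card_gt_0_iff)
  ultimately have "card (\<mu> \<union> \<nu>) \<le> d"
    using False \<nu>(2) d by linarith
  then have "even (card (Star L d (\<mu> \<union> \<nu>)))"
    using even_card_Star[OF L] simplicesD(3)[OF \<mu>] \<nu>(1) d by simp
  moreover have "\<nu> \<notin> Link L d n \<mu>"
    using False by (auto simp: Link_def simplices_def)
  ultimately show ?thesis
    by simp
qed

lemma even_card_Link_supsets:
  assumes L: "colex d L" and b: "b \<in> simplices L m" and d: "Suc (m + n) = d"
    and \<rho>: "finite \<rho>" "card \<rho> = n"
  shows "even (card {\<tau>\<in>Link L d n b. \<rho> \<subseteq> \<tau>})"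
proof (cases "\<rho> \<inter> b = {}")
  case True
  have sc: "simplicial_complex L"
    using colex_simplicial_complex[OF L] d[symmetric] by simp
  have "{\<tau>\<in>Link L d n b. \<rho> \<subseteq> \<tau>} = (\<lambda>\<sigma>. \<sigma> - b) ` {\<sigma>\<in>Star L d b. \<rho> \<subseteq> \<sigma> - b}"
    unfolding Link_top_eq[OF sc b d] by blast
  also have "{\<sigma>\<in>Star L d b. \<rho> \<subseteq> \<sigma> - b} = Star L d (b \<union> \<rho>)"
    using True by (auto simp: Star_def)
  finally have "{\<tau>\<in>Link L d n b. \<rho> \<subseteq> \<tau>} = (\<lambda>\<sigma>. \<sigma> - b) ` Star L d (b \<union> \<rho>)" .
  moreover have "inj_on (\<lambda>\<sigma>. \<sigma> - b) (Star L d (b \<union> \<rho>))"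
    by (rule inj_onI) (auto simp: Star_def)
  moreover have "card (b \<union> \<rho>) = d"
    using card_Un_disjoint[OF simplicesD(3)[OF b] \<rho>(1)] True simplicesD(2)[OF b] \<rho>(2) d
    by (simp add: Int_commute)
  ultimately show ?thesis
    using even_card_Star[OF L] simplicesD(3)[OF b] \<rho>(1) d by (simp add: card_image)
next
  case False
  then have "{\<tau>\<in>Link L d n b. \<rho> \<subseteq> \<tau>} = {}"
    by (auto simp: Link_def)
  then show ?thesis
    by (simp only: card.empty even_zero)
qed

lemma Link_colors:
  assumes L: "simplicial_complex L" and col: "proper_coloring L (Suc d) col"
    and b: "b \<in> simplices L m" and d: "Suc (m + n) = d" and \<tau>: "\<tau> \<in> Link L d n b"
  shows "col ` \<tau> = {..<Suc d} - col ` b"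
proof -
  obtain \<sigma> where \<sigma>: "\<sigma> \<in> simplices L d" "b \<subseteq> \<sigma>" "\<tau> = \<sigma> - b"
    using \<tau> unfolding Link_top_eq[OF L b d] Star_def by blast
  have "inj_on col \<sigma>"
    using proper_coloring_inj_on[OF L col simplicesD(1)[OF \<sigma>(1)]] .
  then show ?thesis
    using \<sigma> proper_coloring_top_simplex[OF L col \<sigma>(1)] by (simp add: inj_on_image_set_diff)
qed

lemma even_card_colored_Link_supsets:
  assumes L: "colex d L" and col: "proper_coloring L (Suc d) col"
    and b: "b \<in> simplices L m" and d: "Suc (m + n) = d" and \<rho>: "finite \<rho>" "card \<rho> = n"
  shows "even (card {\<tau>\<in>{\<tau>\<in>Link L d n b. col ` \<tau> = S}. \<rho> \<subseteq> \<tau>})"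
proof -
  have "simplicial_complex L"
    using colex_simplicial_complex[OF L] d[symmetric] by simp
  then have "{\<tau>\<in>{\<tau>\<in>Link L d n b. col ` \<tau> = S}. \<rho> \<subseteq> \<tau>} =
      (if {..<Suc d} - col ` b = S then {\<tau>\<in>Link L d n b. \<rho> \<subseteq> \<tau>} else {})"
    using Link_colors[OF _ col b d] by auto
  then show ?thesis
    using even_card_Link_supsets[OF L b d \<rho>] by simp
qed

lemma odd_card_cone_supsets_iff:
  assumes T: "finite T" "\<And>\<tau>. \<tau> \<in> T \<Longrightarrow> u \<notin> \<tau> \<and> card \<tau> = Suc n"
    and cycle: "\<And>\<rho>. finite \<rho> \<Longrightarrow> card \<rho> = n \<Longrightarrow> even (card {\<tau>\<in>T. \<rho> \<subseteq> \<tau>})"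
    and \<kappa>: "card \<kappa> = Suc n"
  shows "odd (card {a\<in>insert u ` T. \<kappa> \<subseteq> a}) \<longleftrightarrow> \<kappa> \<in> T"
proof (cases "u \<in> \<kappa>")
  case True
  have "{a\<in>insert u ` T. \<kappa> \<subseteq> a} = insert u ` {\<tau>\<in>T. \<kappa> - {u} \<subseteq> \<tau>}"
    using True by auto
  moreover have "inj_on (insert u) T"
    using T(2) by (intro inj_onI) (metis insert_ident)
  moreover have "finite (\<kappa> - {u})" "card (\<kappa> - {u}) = n"
    using \<kappa> True by (simp_all add: card_ge_0_finite)
  ultimately have "even (card {a\<in>insert u ` T. \<kappa> \<subseteq> a})"
    using cycle by (simp add: card_image inj_on_subset)
  moreover have "\<kappa> \<notin> T"
    using T(2) True by blast
  ultimately show ?thesis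
    by simp
next
  case False
  have "\<tau> = \<kappa>" if "\<tau> \<in> T" "\<kappa> \<subseteq> insert u \<tau>" for \<tau>
  proof -
    have "\<kappa> \<subseteq> \<tau>" "card \<tau> = card \<kappa>"
      using that False T(2) \<kappa> by auto
    then show ?thesis
      using card_subset_eq[of \<tau> \<kappa>] \<kappa> by (simp add: card_ge_0_finite)
  qed
  then have "{a\<in>insert u ` T. \<kappa> \<subseteq> a} = (if \<kappa> \<in> T then {insert u \<kappa>} else {})"
    by auto
  then show ?thesis
    by simp
qed

lemma mem_bd_csum_cones_iff:
  assumes B: "finite B" "\<And>b. b \<in> B \<Longrightarrow> finite (T b)"
    and T: "\<And>b \<tau>. b \<in> B \<Longrightarrow> \<tau> \<in> T b \<Longrightarrow> u b \<notin> \<tau> \<and> card \<tau> = Suc n"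
    and cycle: "\<And>b \<rho>. b \<in> B \<Longrightarrow> finite \<rho> \<Longrightarrow> card \<rho> = n \<Longrightarrow> even (card {\<tau>\<in>T b. \<rho> \<subseteq> \<tau>})"
  shows "\<kappa> \<in> bd L (Suc n) (csum B (\<lambda>b. insert (u b) ` T b)) \<longleftrightarrow>
           card \<kappa> = Suc n \<and> odd (card {b\<in>B. \<kappa> \<in> T b})"
proof (cases "card \<kappa> = Suc n")
  case True
  have "odd (card {a\<in>csum B (\<lambda>b. insert (u b) ` T b). \<kappa> \<subseteq> a}) \<longleftrightarrow>
        odd (\<Sum>b\<in>B. card {a\<in>insert (u b) ` T b. \<kappa> \<subseteq> a})"
    using B by (intro odd_card_csum_filter) simp_all
  also have "\<dots> \<longleftrightarrow> odd (card {b\<in>B. \<kappa> \<in> T b})"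
  proof (rule odd_sum_iff_odd_card[OF B(1)])
    fix b assume b: "b \<in> B"
    show "odd (card {a\<in>insert (u b) ` T b. \<kappa> \<subseteq> a}) \<longleftrightarrow> \<kappa> \<in> T b"
      by (rule odd_card_cone_supsets_iff[OF B(2)[OF b] T[OF b] cycle[OF b] True])
  qed
  finally show ?thesis
    using True by (simp add: mem_bd_iff)
qed (simp add: mem_bd_iff)

lemma odd_card_coboundary_supsets_iff:
  assumes L: "colex d L" and \<beta>: "\<beta> \<subseteq> simplices L m" and d: "Suc (m + n) = d"
    and \<kappa>: "finite \<kappa>" "card \<kappa> \<le> Suc n"
  shows "odd (card {\<sigma>\<in>gbd L m d \<beta>. \<kappa> \<subseteq> \<sigma>}) \<longleftrightarrow> odd (card {b\<in>\<beta>. \<kappa> \<in> Link L d n b})"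
proof -
  have "finite L"
    using colex_simplicial_complex[OF L] d[symmetric] by (simp add: simplicial_complex_def)
  then have "finite \<beta>"
    using \<beta> finite_simplices finite_subset by blast
  have "odd (card {\<sigma>\<in>gbd L m d \<beta>. \<kappa> \<subseteq> \<sigma>}) \<longleftrightarrow> odd (\<Sum>b\<in>\<beta>. card (Star L d (b \<union> \<kappa>)))"
    using odd_card_csum_Star_supsets[OF \<open>finite L\<close> \<open>finite \<beta>\<close>, of d id \<kappa>] d by (simp add: gbd_up_eq)
  also have "\<dots> \<longleftrightarrow> odd (card {b\<in>\<beta>. \<kappa> \<in> Link L d n b})"
    using odd_card_Star_Un_iff_Link[OF L _ d \<kappa>] \<beta> \<open>finite \<beta>\<close> by (intro odd_sum_iff_odd_card) auto
  finally show ?thesis .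
qed

lemma insert_Link_mem_simplices:
  assumes L: "simplicial_complex L" and \<tau>: "\<tau> \<in> Link L d n b" and "u \<in> b"
  shows "insert u \<tau> \<in> simplices L (Suc n)"
proof -
  obtain \<sigma> where \<sigma>: "\<sigma> \<in> simplices L d" "b \<union> \<tau> \<subseteq> \<sigma>" and "\<tau> \<in> simplices L n" "\<tau> \<inter> b = {}"
    using \<tau> unfolding Link_def by blast
  then have "u \<notin> \<tau>" "card \<tau> = Suc n" "finite \<tau>"
    using \<open>u \<in> b\<close> simplicesD(2,3) by blast+
  moreover have "insert u \<tau> \<in> L"
    using simplicial_complex_face[OF L simplicesD(1)[OF \<sigma>(1)], of "insert u \<tau>"] \<sigma>(2) \<open>u \<in> b\<close> by blast
  ultimately show ?thesis
    by (simp add: simplices_def)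
qed

text \<open>The chain bounded by \<open>\<gamma>\<close> is the sum over \<open>b \<in> \<beta>\<close> of the cones \<open>u\<^sub>b * T b\<close>, where \<open>T b\<close> is the
  \<open>S\<close>-coloured part of the link of \<open>b\<close> and \<open>u\<^sub>b\<close> is any vertex of \<open>b\<close>.\<close>

lemma boundary_if_colored_coboundary_parity:
  assumes L: "colex d L" and col: "proper_coloring L (Suc d) col" and "k < d"
    and \<beta>: "\<beta> \<subseteq> simplices L (d - k - 1)"
    and \<gamma>: "\<gamma> \<subseteq> simplices L k" "\<And>\<kappa>. \<kappa> \<in> \<gamma> \<Longrightarrow> col ` \<kappa> = S"
    and parity: "\<And>\<kappa>. card \<kappa> = Suc k \<Longrightarrow> col ` \<kappa> = S \<Longrightarrow>
                   \<kappa> \<in> \<gamma> \<longleftrightarrow> odd (card {\<sigma>\<in>gbd L (d - k - 1) d \<beta>. \<kappa> \<subseteq> \<sigma>})"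
  shows "\<exists>\<alpha>. \<alpha> \<subseteq> simplices L (Suc k) \<and> \<gamma> = bd L (Suc k) \<alpha>"
proof -
  have dim: "Suc (d - k - 1 + k) = d"
    using \<open>k < d\<close> by simp
  have sc: "simplicial_complex L"
    using colex_simplicial_complex[OF L] \<open>k < d\<close> by simp
  then have "finite L"
    by (simp add: simplicial_complex_def)
  have "finite \<beta>"
    using \<beta> finite_simplices[OF \<open>finite L\<close>] finite_subset by blast
  define T where "T b = {\<tau>\<in>Link L d k b. col ` \<tau> = S}" for b
  define u where "u b = (SOME x. x \<in> b)" for b :: "'a set"
  have u: "u b \<in> b" if "b \<in> \<beta>" for b
  proof -
    have "card b = Suc (d - k - 1)"
      using \<beta> that simplicesD(2) by blast
    then show ?thesis
      unfolding u_def by (auto simp: some_in_eq)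
  qed
  define \<alpha> where "\<alpha> = csum \<beta> (\<lambda>b. insert (u b) ` T b)"
  have bd_\<alpha>: "\<kappa> \<in> bd L (Suc k) \<alpha> \<longleftrightarrow> card \<kappa> = Suc k \<and> odd (card {b\<in>\<beta>. \<kappa> \<in> T b})" for \<kappa>
    unfolding \<alpha>_def
  proof (rule mem_bd_csum_cones_iff[OF \<open>finite \<beta>\<close>])
    show "finite (T b)" for b
      by (rule finite_subset[OF _ finite_simplices[OF \<open>finite L\<close>, of k]]) (auto simp: T_def Link_def)
    show "u b \<notin> \<tau> \<and> card \<tau> = Suc k" if "b \<in> \<beta>" "\<tau> \<in> T b" for b \<tau>
      using that u[OF that(1)] simplicesD(2) by (auto simp: T_def Link_def)
    show "even (card {\<tau>\<in>T b. \<rho> \<subseteq> \<tau>})" if "b \<in> \<beta>" "finite \<rho>" "card \<rho> = k" for b \<rho>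
      using even_card_colored_Link_supsets[OF L col _ dim that(2,3)] \<beta> that(1) by (auto simp: T_def)
  qed
  have "\<kappa> \<in> \<gamma> \<longleftrightarrow> card \<kappa> = Suc k \<and> odd (card {b\<in>\<beta>. \<kappa> \<in> T b})" for \<kappa>
  proof (cases "card \<kappa> = Suc k \<and> col ` \<kappa> = S")
    case True
    then have "\<kappa> \<in> \<gamma> \<longleftrightarrow> odd (card {b\<in>\<beta>. \<kappa> \<in> Link L d k b})"
      using parity odd_card_coboundary_supsets_iff[OF L \<beta> dim] by (simp add: card_ge_0_finite)
    then show ?thesis
      using True by (simp add: T_def)
  next
    case False
    have "\<kappa> \<notin> \<gamma>"
      using False \<gamma> simplicesD(2) by blast
    moreover have "{b\<in>\<beta>. \<kappa> \<in> T b} = {}" if "card \<kappa> = Suc k"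
      using False that by (auto simp: T_def)
    ultimately show ?thesis
      by (metis card.empty even_zero)
  qed
  then have "\<gamma> = bd L (Suc k) \<alpha>"
    using bd_\<alpha> by blast
  moreover have "\<alpha> \<subseteq> simplices L (Suc k)"
  proof
    fix a assume "a \<in> \<alpha>"
    then have "a \<in> (\<Union>b\<in>\<beta>. insert (u b) ` T b)"
      unfolding \<alpha>_def by (rule subsetD[OF csum_subset_Union])
    then show "a \<in> simplices L (Suc k)"
      using insert_Link_mem_simplices[OF sc] u by (auto simp: T_def)
  qed
  ultimately show ?thesis
    by blast
qed

section \<open>The lifted chain\<close>

locale lifted_chain =
  fixes L :: "'v set set" and d k c_star :: nat and C :: "nat set"
    and col :: "'v \<Rightarrow> nat" and \<gamma> :: "'v set set" and \<Omega> :: "'v \<Rightarrow> 'v set set"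
  assumes colex: "colex d L"
    and col: "proper_coloring L (Suc d) col"
    and k: "1 \<le> k" "k < d"
    and card_C: "card C = k"
    and c_star: "c_star \<notin> C"
    and chain: "\<gamma> \<subseteq> simplices L k"
    and colgamma: "colset col \<gamma> \<subseteq> insert c_star C"
    and Omega: "\<forall>v\<in>colored_vertices col c_star \<gamma>.
        \<Omega> v \<subseteq> Star L (d - k) {v} \<and>
        (\<forall>\<mu>\<in>\<Omega> v. col ` \<mu> = {..<Suc d} - C) \<and>
        csum (\<Omega> v) (Link L d (k - 1)) = bd L k (\<gamma> \<inter> Star L k {v})"
begin

abbreviation "V \<equiv> colored_vertices col c_star \<gamma>"

abbreviation "lam \<equiv> csum (SIGMA v:V. \<Omega> v) (\<lambda>(v, \<mu>). Star L d \<mu>)"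

lemma simplicial: "simplicial_complex L"
  using colex_simplicial_complex[OF colex] k by simp

lemma finite_L: "finite L"
  using simplicial by (simp add: simplicial_complex_def)

lemma finite_gamma: "finite \<gamma>"
  using chain finite_simplices[OF finite_L] by (rule finite_subset)

lemma finite_V: "finite V"
proof -
  have "finite \<kappa>" if "\<kappa> \<in> \<gamma>" for \<kappa>
    using chain that simplicesD(3) by blast
  then show ?thesis
    using finite_gamma by (simp add: colored_vertices_def)
qed

lemma finite_Omega:
  assumes "v \<in> V"
  shows "finite (\<Omega> v)"
proof -
  have "\<Omega> v \<subseteq> simplices L (d - k)"
    using Omega assms by (auto simp: Star_def)
  then show ?thesis
    using finite_simplices[OF finite_L] by (rule finite_subset)
qed

lemma finite_pairs: "finite (SIGMA v:V. \<Omega> v)"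
  using finite_V finite_Omega by (rule finite_SigmaI)

lemma pairD:
  assumes "(v, \<mu>) \<in> (SIGMA v:V. \<Omega> v)"
  shows "\<mu> \<in> simplices L (d - k)" "v \<in> \<mu>" "col v = c_star" "col ` \<mu> = {..<Suc d} - C"
  using assms Omega by (auto simp: Star_def colored_vertices_def)

lemma finite_C: "finite C"
  using card_C k(1) by (intro card_ge_0_finite) simp

lemma card_colors: "card (insert c_star C) = Suc k"
  using card_C c_star finite_C by simp

lemma inj_on_col_if_colored:
  assumes "card \<kappa> = Suc k" "col ` \<kappa> = insert c_star C"
  shows "inj_on col \<kappa>"
  using assms card_colors by (simp add: inj_on_iff_eq_card card_ge_0_finite)

lemma gamma_colors:
  assumes "\<kappa> \<in> \<gamma>"
  shows "col ` \<kappa> = insert c_star C" "card \<kappa> = Suc k"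
proof -
  have \<kappa>: "\<kappa> \<in> L" "card \<kappa> = Suc k" "finite \<kappa>"
    using chain assms simplicesD by blast+
  moreover have "col ` \<kappa> \<subseteq> insert c_star C"
    using colgamma assms by (auto simp: colset_def)
  moreover have "card (col ` \<kappa>) = Suc k"
    using proper_coloring_inj_on[OF simplicial col \<kappa>(1)] \<kappa>(2) by (simp add: card_image)
  ultimately show "col ` \<kappa> = insert c_star C" "card \<kappa> = Suc k"
    using card_colors card_subset_eq[of "insert c_star C" "col ` \<kappa>"] finite_C by simp_all
qed

lemma card_V_Int:
  assumes "\<kappa> \<in> \<gamma>"
  shows "card (V \<inter> \<kappa>) = 1"
proof -
  obtain w where w: "w \<in> \<kappa>" "col w = c_star"
    using gamma_colors(1)[OF assms] by (metis imageE insertI1)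
  have "x = w" if "x \<in> \<kappa>" "col x = c_star" for x
    using inj_onD[OF inj_on_col_if_colored[OF gamma_colors(2,1)[OF assms]]] that w by metis
  then have "{x\<in>\<kappa>. col x = c_star} = {w}"
    using w by blast
  moreover have "V \<inter> \<kappa> = {x\<in>\<kappa>. col x = c_star}"
    using assms by (auto simp: colored_vertices_def)
  ultimately show ?thesis
    by simp
qed

lemma odd_card_Omega_Link_iff:
  assumes "v \<in> V" "card \<nu> = k"
  shows "odd (card {\<mu>\<in>\<Omega> v. \<nu> \<in> Link L d (k - 1) \<mu>}) \<longleftrightarrow> odd (card {\<kappa>\<in>\<gamma>. v \<in> \<kappa> \<and> \<nu> \<subseteq> \<kappa>})"
proof -
  have "csum (\<Omega> v) (Link L d (k - 1)) = bd L k (\<gamma> \<inter> Star L k {v})"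
    using Omega assms(1) by blast
  then have "odd (card {\<mu>\<in>\<Omega> v. \<nu> \<in> Link L d (k - 1) \<mu>}) \<longleftrightarrow> \<nu> \<in> bd L k (\<gamma> \<inter> Star L k {v})"
    unfolding csum_def by (metis (no_types, lifting) mem_Collect_eq)
  also have "\<dots> \<longleftrightarrow> odd (card {\<kappa>\<in>\<gamma>. v \<in> \<kappa> \<and> \<nu> \<subseteq> \<kappa>})"
  proof -
    have "{\<sigma>\<in>\<gamma> \<inter> Star L k {v}. \<nu> \<subseteq> \<sigma>} = {\<kappa>\<in>\<gamma>. v \<in> \<kappa> \<and> \<nu> \<subseteq> \<kappa>}"
      using chain by (auto simp: Star_def)
    then show ?thesis
      using assms(2) k(1) by (simp add: mem_bd_iff)
  qed
  finally show ?thesis .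
qed

lemma odd_card_lam_supsets:
  "odd (card {\<sigma>\<in>lam. X \<subseteq> \<sigma>}) \<longleftrightarrow>
     odd (card {p\<in>(SIGMA v:V. \<Omega> v). odd (card (Star L d (snd p \<union> X)))})"
  unfolding split_def
  using odd_card_csum_Star_supsets[OF finite_L finite_pairs, of d snd X] finite_pairs
  by (simp add: even_sum_iff)

lemma lam_subset: "lam \<subseteq> simplices L d"
  using csum_subset_Union by (fastforce simp: Star_def)

lemma odd_card_lam_supsets_iff:
  assumes \<nu>: "card \<nu> = k"
  shows "odd (card {\<sigma>\<in>lam. \<nu> \<subseteq> \<sigma>}) \<longleftrightarrow> odd (card {\<kappa>\<in>\<gamma>. \<nu> \<subseteq> \<kappa>})"
proof -
  have "finite \<nu>"
    using \<nu> k(1) by (simp add: card_ge_0_finite)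
  have dim: "Suc (d - k + (k - 1)) = d"
    using k by simp
  have "odd (card (Star L d (\<mu> \<union> \<nu>))) \<longleftrightarrow> \<nu> \<in> Link L d (k - 1) \<mu>"
    if "(v, \<mu>) \<in> (SIGMA v:V. \<Omega> v)" for v \<mu>
    using odd_card_Star_Un_iff_Link[OF colex pairD(1)[OF that] dim \<open>finite \<nu>\<close>] \<nu> k(1) by simp
  then have "{p\<in>(SIGMA v:V. \<Omega> v). odd (card (Star L d (snd p \<union> \<nu>)))} =
      (SIGMA v:V. {\<mu>\<in>\<Omega> v. \<nu> \<in> Link L d (k - 1) \<mu>})"
    by fastforce
  then have "odd (card {\<sigma>\<in>lam. \<nu> \<subseteq> \<sigma>}) \<longleftrightarrow>
      odd (\<Sum>v\<in>V. card {\<mu>\<in>\<Omega> v. \<nu> \<in> Link L d (k - 1) \<mu>})"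
    using odd_card_lam_supsets finite_V finite_Omega by simp
  also have "\<dots> \<longleftrightarrow> odd (\<Sum>v\<in>V. card {\<kappa>\<in>{\<kappa>\<in>\<gamma>. \<nu> \<subseteq> \<kappa>}. v \<in> \<kappa>})"
  proof (rule odd_sum_cong[OF finite_V])
    fix v assume "v \<in> V"
    have "{\<kappa>\<in>{\<kappa>\<in>\<gamma>. \<nu> \<subseteq> \<kappa>}. v \<in> \<kappa>} = {\<kappa>\<in>\<gamma>. v \<in> \<kappa> \<and> \<nu> \<subseteq> \<kappa>}"
      by blast
    then show "odd (card {\<mu>\<in>\<Omega> v. \<nu> \<in> Link L d (k - 1) \<mu>}) \<longleftrightarrow>
        odd (card {\<kappa>\<in>{\<kappa>\<in>\<gamma>. \<nu> \<subseteq> \<kappa>}. v \<in> \<kappa>})"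
      using odd_card_Omega_Link_iff[OF \<open>v \<in> V\<close> \<nu>] by simp
  qed
  also have "(\<Sum>v\<in>V. card {\<kappa>\<in>{\<kappa>\<in>\<gamma>. \<nu> \<subseteq> \<kappa>}. v \<in> \<kappa>}) = card {\<kappa>\<in>\<gamma>. \<nu> \<subseteq> \<kappa>}"
  proof (rule sum_card_filter_mem_eq_card[OF finite_V])
    show "finite {\<kappa>\<in>\<gamma>. \<nu> \<subseteq> \<kappa>}"
      using finite_gamma by simp
    show "card (V \<inter> \<kappa>) = 1" if "\<kappa> \<in> {\<kappa>\<in>\<gamma>. \<nu> \<subseteq> \<kappa>}" for \<kappa>
      using card_V_Int that by simp
  qed
  finally show ?thesis .
qed

lemma gbd_lam_eq_bd: "gbd L d (k - 1) lam = bd L k \<gamma>"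
  using odd_card_lam_supsets_iff k by (auto simp: mem_gbd_down_iff mem_bd_iff)

lemma odd_card_Star_pair_Un_iff:
  assumes p: "(v, \<mu>) \<in> (SIGMA v:V. \<Omega> v)"
    and \<kappa>: "card \<kappa> = Suc k" "col ` \<kappa> = insert c_star C"
    and w: "w \<in> \<kappa>" "col w = c_star"
  shows "odd (card (Star L d (\<mu> \<union> \<kappa>))) \<longleftrightarrow> v = w \<and> \<kappa> - {w} \<in> Link L d (k - 1) \<mu>"
proof -
  note \<mu> = pairD[OF p]
  have "finite \<kappa>"
    using \<kappa>(1) by (simp add: card_ge_0_finite)
  have common: "x = v" if "x \<in> \<mu>" "x \<in> \<kappa>" for x
  proof -
    have "col x = c_star"
      using \<mu>(4) \<kappa>(2) that by blast
    then show ?thesis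
      using inj_onD[OF proper_coloring_inj_on[OF simplicial col simplicesD(1)[OF \<mu>(1)]]]
        \<mu>(2,3) that(1) by metis
  qed
  show ?thesis
  proof (cases "v = w")
    case True
    have dim: "Suc (d - k + (k - 1)) = d"
      using k by simp
    have "\<mu> \<union> \<kappa> = \<mu> \<union> (\<kappa> - {w})"
      using True \<mu>(2) by blast
    moreover have "finite (\<kappa> - {w})" "card (\<kappa> - {w}) \<le> Suc (k - 1)"
      using \<open>finite \<kappa>\<close> \<kappa>(1) w(1) k(1) by simp_all
    ultimately show ?thesis
      using odd_card_Star_Un_iff_Link[OF colex \<mu>(1) dim] True by simp
  next
    case False
    have "x = w" if "x \<in> \<kappa>" "col x = c_star" for x
      using inj_onD[OF inj_on_col_if_colored[OF \<kappa>]] that w by metis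
    then have "\<mu> \<inter> \<kappa> = {}"
      using common False \<mu>(3) by blast
    then have "card (\<mu> \<union> \<kappa>) = Suc (d - k) + Suc k"
      using card_Un_disjoint[OF simplicesD(3)[OF \<mu>(1)] \<open>finite \<kappa>\<close>] simplicesD(2)[OF \<mu>(1)] \<kappa>(1)
      by simp
    then have "Star L d (\<mu> \<union> \<kappa>) = {}"
      using k by (intro Star_eq_empty_if_card_gt) simp
    then show ?thesis
      using False by simp
  qed
qed

lemma odd_card_lam_supsets_Omega_Link_iff:
  assumes \<kappa>: "card \<kappa> = Suc k" "col ` \<kappa> = insert c_star C"
    and w: "w \<in> \<kappa>" "col w = c_star"
  shows "odd (card {\<sigma>\<in>lam. \<kappa> \<subseteq> \<sigma>}) \<longleftrightarrow>
           w \<in> V \<and> odd (card {\<mu>\<in>\<Omega> w. \<kappa> - {w} \<in> Link L d (k - 1) \<mu>})"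
proof -
  have pairs: "{p\<in>(SIGMA v:V. \<Omega> v). odd (card (Star L d (snd p \<union> \<kappa>)))} =
      (SIGMA v:V \<inter> {w}. {\<mu>\<in>\<Omega> v. \<kappa> - {w} \<in> Link L d (k - 1) \<mu>})"
    using odd_card_Star_pair_Un_iff[OF _ \<kappa> w] by fastforce
  show ?thesis
  proof (cases "w \<in> V")
    case True
    then have "V \<inter> {w} = {w}"
      by blast
    then show ?thesis
      using odd_card_lam_supsets[of \<kappa>] pairs finite_Omega[OF True] True by simp
  next
    case False
    then have "V \<inter> {w} = {}"
      by blast
    then show ?thesis
      using odd_card_lam_supsets[of \<kappa>] pairs False by simp
  qed
qed

lemma odd_card_lam_supsets_colored:
  assumes \<kappa>: "card \<kappa> = Suc k" "col ` \<kappa> = insert c_star C"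
  shows "odd (card {\<sigma>\<in>lam. \<kappa> \<subseteq> \<sigma>}) \<longleftrightarrow> \<kappa> \<in> \<gamma>"
proof -
  obtain w where w: "w \<in> \<kappa>" "col w = c_star"
    using \<kappa>(2) by (metis imageE insertI1)
  have "{\<kappa>'\<in>\<gamma>. w \<in> \<kappa>' \<and> \<kappa> - {w} \<subseteq> \<kappa>'} = \<gamma> \<inter> {\<kappa>}"
  proof -
    have "\<kappa>' = \<kappa>" if "\<kappa>' \<in> \<gamma>" "w \<in> \<kappa>'" "\<kappa> - {w} \<subseteq> \<kappa>'" for \<kappa>'
    proof -
      have "\<kappa> \<subseteq> \<kappa>'"
        using that by blast
      moreover have "card \<kappa>' = card \<kappa>"
        using gamma_colors(2)[OF that(1)] \<kappa>(1) by simp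
      ultimately show ?thesis
        using card_subset_eq[of \<kappa>' \<kappa>] \<kappa>(1) by (simp add: card_ge_0_finite)
    qed
    then show ?thesis
      using w(1) by blast
  qed
  moreover have "odd (card {\<sigma>\<in>lam. \<kappa> \<subseteq> \<sigma>}) \<longleftrightarrow>
      w \<in> V \<and> odd (card {\<kappa>'\<in>\<gamma>. w \<in> \<kappa>' \<and> \<kappa> - {w} \<subseteq> \<kappa>'})"
    using odd_card_lam_supsets_Omega_Link_iff[OF \<kappa> w] odd_card_Omega_Link_iff[of w "\<kappa> - {w}"] \<kappa>(1) w(1)
    by auto
  ultimately show ?thesis
    using w by (auto simp: colored_vertices_def Int_insert_right)
qed

lemma lam_not_coboundary:
  assumes "\<nexists>\<beta>. \<beta> \<subseteq> simplices L (Suc k) \<and> \<gamma> = bd L (Suc k) \<beta>"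
  shows "\<nexists>\<beta>. \<beta> \<subseteq> simplices L (d - k - 1) \<and> lam = gbd L (d - k - 1) d \<beta>"
proof
  assume "\<exists>\<beta>. \<beta> \<subseteq> simplices L (d - k - 1) \<and> lam = gbd L (d - k - 1) d \<beta>"
  then obtain \<beta> where \<beta>: "\<beta> \<subseteq> simplices L (d - k - 1)" "lam = gbd L (d - k - 1) d \<beta>"
    by blast
  have "\<exists>\<alpha>. \<alpha> \<subseteq> simplices L (Suc k) \<and> \<gamma> = bd L (Suc k) \<alpha>"
  proof (rule boundary_if_colored_coboundary_parity[OF colex col k(2) \<beta>(1) chain gamma_colors(1)])
    show "\<kappa> \<in> \<gamma> \<longleftrightarrow> odd (card {\<sigma>\<in>gbd L (d - k - 1) d \<beta>. \<kappa> \<subseteq> \<sigma>})"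
      if "card \<kappa> = Suc k" "col ` \<kappa> = insert c_star C" for \<kappa>
      using odd_card_lam_supsets_colored[OF that] \<beta>(2) by simp
  qed
  then show False
    using assms by blast
qed

end

theorem lemma6:
  fixes L :: "'v set set" and d k c_star :: nat and C :: "nat set"
    and col :: "'v \<Rightarrow> nat" and \<gamma> :: "'v set set" and \<Omega> :: "'v \<Rightarrow> 'v set set"
  assumes colex: "colex d L"
    and standing: "vertex_balls L d"
    and col: "proper_coloring L (Suc d) col"
    and k: "1 \<le> k" "k < d"
    and C: "C \<subseteq> {..<Suc d}" "card C = k"
    and cstar: "c_star < Suc d" "c_star \<notin> C"
    and cycle: "\<gamma> \<subseteq> simplices L k" "bd L k \<gamma> = {}"
    and colgamma: "colset col \<gamma> \<subseteq> insert c_star C"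
    and Omega: "\<forall>v\<in>colored_vertices col c_star \<gamma>.
        \<Omega> v \<subseteq> Star L (d - k) {v} \<and>
        (\<forall>\<mu>\<in>\<Omega> v. col ` \<mu> = {..<Suc d} - C) \<and>
        csum (\<Omega> v) (Link L d (k - 1)) = bd L k (\<gamma> \<inter> Star L k {v})"
  defines "lam \<equiv> csum (SIGMA v:colored_vertices col c_star \<gamma>. \<Omega> v) (\<lambda>(v, \<mu>). Star L d \<mu>)"
  shows "(lam \<subseteq> simplices L d \<and> gbd L d (k - 1) lam = {}) \<and>
         ((\<nexists>\<beta>. \<beta> \<subseteq> simplices L (Suc k) \<and> \<gamma> = bd L (Suc k) \<beta>) \<longrightarrow>
         (\<nexists>\<beta>. \<beta> \<subseteq> simplices L (d - k - 1) \<and> lam = gbd L (d - k - 1) d \<beta>))"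
proof -
  interpret lifted_chain L d k c_star C col \<gamma> \<Omega>
    by unfold_locales (fact colex col k C(2) cstar(2) cycle(1) colgamma Omega)+
  show ?thesis
    unfolding lam_def using lam_subset gbd_lam_eq_bd cycle(2) lam_not_coboundary by simp
qed

end
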